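(* Fix $\eta\in(0,1/3)$. There is a constant $c>0$ depending only on $\eta$ such that the following holds. Let $N,P\ge 2$ be integers and let $\boldsymbol a\in\mathbb Z^N$, $\boldsymbol\phi_0,\boldsymbol\phi_1\in\mathbb Z^P$ be such that, with $\overline{a_{n\cdot}}=a_{n\cdot}/(2P)$, $f_{p,0}=\phi_{p,0}/(2N)$, $f_{p,1}=\phi_{p,1}/(2N)$, one has $\overline{a_{n\cdot}}\in[\eta,1-\eta]$ for all $n\in[N]$ and $f_{p,0},f_{p,1}\ge\eta$, $f_{p,0}+f_{p,1}\le 1-\eta$ for all $p\in[P]$. If exactly one of the two statements "$|\mathscr A_1(N,P;\boldsymbol a)|>|\mathscr A_2(N,P;\boldsymbol\phi_0,\boldsymbol\phi_1)|$" and "$H_1-H_2+\overline f>0$" holds, then $$H_1-H_2+\overline f\in\left(-c\left(\frac{\log N}{N}+\frac{\log P}{P}\right),\ c\left(\frac{\log N}{N}+\frac{\log P}{P}\right)\right].$$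
   Context: Let $N,P$ be positive integers. An admixed array is a pair $[\mathbf A,\mathbf X]$ of matrices $\mathbf A=(A_{nj}),\mathbf X=(X_{nj})\in\{0,1\}^{N\times 2P}$; for $p\in[P]$, columns $p$ and $P+p$ form the $p$th locus. The row local ancestry tally of row $n$ is $A_{n\cdot}=\sum_{j=1}^{2P}A_{nj}$. The ancestry-specific allele dosages of locus $p$ are $\Phi_{p,0}=\sum_{n=1}^N[(1-A_{np})X_{np}+(1-A_{n(P+p)})X_{n(P+p)}]$ and $\Phi_{p,1}=\sum_{n=1}^N[A_{np}X_{np}+A_{n(P+p)}X_{n(P+p)}]$. $\mathscr A_1(N,P;\boldsymbol a)$ is the set of admixed arrays with $A_{n\cdot}=a_{n\cdot}$ for all $n$; $\mathscr A_2(N,P;\boldsymbol\phi_0,\boldsymbol\phi_1)$ is the set of admixed arrays with $\Phi_{p,0}=\phi_{p,0}$, $\Phi_{p,1}=\phi_{p,1}$ for all $p$. $\log$ is base 2. For a probability vector $(z_1,\ldots,z_I)$, $H(z_1,\ldots,z_I)=\sum_i z_i\log(1/z_i)$ (binary Shannon entropy). Define $H_1=\frac1N\sum_{n=1}^N H(\overline{a_{n\cdot}},1-\overline{a_{n\cdot}})$, $H_2=\frac1P\sum_{p=1}^P H(f_{p,0},f_{p,1},1-f_{p,0}-f_{p,1})$, and $\overline f=\frac1P\sum_{p=1}^P(f_{p,0}+f_{p,1})$. *)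

theory Defs
  imports Complex_Main "HOL-Library.FuncSet"
begin

text \<open>Matrices in {0,1}^(N x 2P), 0-based indices: rows n < N, columns j < 2P;
  locus p < P consists of columns p and P + p.\<close>
definition bin_arrays :: "nat \<Rightarrow> nat \<Rightarrow> (nat \<times> nat \<Rightarrow> nat) set" where
  "bin_arrays N P = ({0..<N} \<times> {0..<2*P}) \<rightarrow>\<^sub>E {0, 1}"

definition row_tally :: "nat \<Rightarrow> (nat \<times> nat \<Rightarrow> nat) \<Rightarrow> nat \<Rightarrow> int" where
  "row_tally P A n = (\<Sum>j<2*P. int (A (n, j)))"

definition Phi0 :: "nat \<Rightarrow> nat \<Rightarrow> (nat \<times> nat \<Rightarrow> nat) \<Rightarrow> (nat \<times> nat \<Rightarrow> nat) \<Rightarrow> nat \<Rightarrow> int" where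
  "Phi0 N P A X p = (\<Sum>n<N. (1 - int (A (n, p))) * int (X (n, p))
                          + (1 - int (A (n, P + p))) * int (X (n, P + p)))"

definition Phi1 :: "nat \<Rightarrow> nat \<Rightarrow> (nat \<times> nat \<Rightarrow> nat) \<Rightarrow> (nat \<times> nat \<Rightarrow> nat) \<Rightarrow> nat \<Rightarrow> int" where
  "Phi1 N P A X p = (\<Sum>n<N. int (A (n, p)) * int (X (n, p))
                          + int (A (n, P + p)) * int (X (n, P + p)))"

definition admixed_arrays :: "nat \<Rightarrow> nat \<Rightarrow> ((nat \<times> nat \<Rightarrow> nat) \<times> (nat \<times> nat \<Rightarrow> nat)) set" where
  "admixed_arrays N P = bin_arrays N P \<times> bin_arrays N P"

definition scrA1 :: "nat \<Rightarrow> nat \<Rightarrow> (nat \<Rightarrow> int) \<Rightarrow> ((nat \<times> nat \<Rightarrow> nat) \<times> (nat \<times> nat \<Rightarrow> nat)) set" where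
  "scrA1 N P a = {(A, X) \<in> admixed_arrays N P. \<forall>n<N. row_tally P A n = a n}"

definition scrA2 :: "nat \<Rightarrow> nat \<Rightarrow> (nat \<Rightarrow> int) \<Rightarrow> (nat \<Rightarrow> int) \<Rightarrow> ((nat \<times> nat \<Rightarrow> nat) \<times> (nat \<times> nat \<Rightarrow> nat)) set" where
  "scrA2 N P phi0 phi1 = {(A, X) \<in> admixed_arrays N P.
      \<forall>p<P. Phi0 N P A X p = phi0 p \<and> Phi1 N P A X p = phi1 p}"

definition entropy :: "real list \<Rightarrow> real" where
  "entropy zs = sum_list (map (\<lambda>z. z * log 2 (1 / z)) zs)"

definition abar :: "nat \<Rightarrow> (nat \<Rightarrow> int) \<Rightarrow> nat \<Rightarrow> real" where
  "abar P a n = real_of_int (a n) / (2 * real P)"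

definition freq :: "nat \<Rightarrow> (nat \<Rightarrow> int) \<Rightarrow> nat \<Rightarrow> real" where
  "freq N phi p = real_of_int (phi p) / (2 * real N)"

definition H1 :: "nat \<Rightarrow> nat \<Rightarrow> (nat \<Rightarrow> int) \<Rightarrow> real" where
  "H1 N P a = (1 / real N) * (\<Sum>n<N. entropy [abar P a n, 1 - abar P a n])"

definition H2 :: "nat \<Rightarrow> nat \<Rightarrow> (nat \<Rightarrow> int) \<Rightarrow> (nat \<Rightarrow> int) \<Rightarrow> real" where
  "H2 N P phi0 phi1 = (1 / real P) *
     (\<Sum>p<P. entropy [freq N phi0 p, freq N phi1 p, 1 - freq N phi0 p - freq N phi1 p])"

definition fbar :: "nat \<Rightarrow> nat \<Rightarrow> (nat \<Rightarrow> int) \<Rightarrow> (nat \<Rightarrow> int) \<Rightarrow> real" where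
  "fbar N P phi0 phi1 = (1 / real P) * (\<Sum>p<P. freq N phi0 p + freq N phi1 p)"

end

theory Submission
  imports Defs "HOL-Library.Disjoint_Sets"
begin

text \<open>
  Both counts factor over independent blocks of cells. With the row tallies fixed, each row of A
  is a subset of prescribed size of its 2P cells and X is free, so
  |A_1| = 2^(2NP) prod_n C(2P, a_n). With the dosages fixed, the 2N cells of locus p carry the
  pair (A, X) with exactly phi_p0 cells equal to (0,1), phi_p1 cells equal to (1,1), and the
  remaining cells free in {(0,0), (1,0)}, so
  |A_2| = prod_p C(2N, phi_p0) C(2N - phi_p0, phi_p1) 2^(2N - phi_p0 - phi_p1).

  Since C(n,k) k^k (n-k)^(n-k) is the largest of the n + 1 terms of the binomial expansion of
  n^n = (k + (n-k))^n, one has n h(k/n) - log(n+1) <= log C(n,k) <= n h(k/n) for the binary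
  entropy h. Consequently log |A_1| - log |A_2| = 2NP (H_1 - H_2 + fbar) up to an error between
  -N log(2P+1) and 2P log(2N+1). If this difference and H_1 - H_2 + fbar have different signs,
  the latter is therefore bounded by the normalised error, which is at most
  3 (log N / N + log P / P).
\<close>

section \<open>Binomial coefficients and entropy\<close>

lemma binomial_Suc_times_Suc: "(n choose Suc k) * Suc k = (n choose k) * (n - k)"
proof (cases n)
  case (Suc m)
  have "(Suc m - k) * (Suc m choose k) = Suc m * (m choose k)"
    using binomial_absorb_comp[of "Suc m" k] by simp
  then show ?thesis
    using Suc_times_binomial_eq[of m k] Suc by (simp add: mult.commute)
qed simp

lemma binomial_term_Suc:
  fixes x y :: real
  assumes "i < n"
  shows "real (n choose Suc i) * x ^ Suc i * y ^ (n - Suc i) * (real (Suc i) * y)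
         = real (n choose i) * x ^ i * y ^ (n - i) * (x * real (n - i))"
proof -
  obtain d where d: "n - i = Suc d" "n - Suc i = d"
    using assms by (metis Suc_diff_Suc diff_Suc_1)
  have "real (n choose Suc i) * real (Suc i) = real (n choose i) * real (n - i)"
    using binomial_Suc_times_Suc[of n i] by (simp only: of_nat_mult[symmetric])
  then show ?thesis
    unfolding d by (simp only: power_Suc mult_ac)
qed

lemma le_peak_if_unimodal:
  fixes f :: "nat \<Rightarrow> 'a :: order"
  assumes "\<And>i. i < k \<Longrightarrow> f i \<le> f (Suc i)" "\<And>i. k \<le> i \<Longrightarrow> i < n \<Longrightarrow> f (Suc i) \<le> f i"
    and "j \<le> n"
  shows "f j \<le> f k"
proof (cases "j \<le> k")
  case True
  show ?thesis
    by (rule lift_Suc_mono_le_ivl[of "{..<k}"]) (use assms(1) True in auto)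
next
  case False
  show ?thesis
    by (rule lift_Suc_antimono_le_ivl[of "{k..<n}"]) (use assms(2,3) False in auto)
qed

lemma binomial_term_le_peak:
  fixes n k j :: nat
  assumes "0 < k" "k < n"
  shows "real (n choose j) * real k ^ j * real (n - k) ^ (n - j)
         \<le> real (n choose k) * real k ^ k * real (n - k) ^ (n - k)"
proof -
  define u where "u i = real (n choose i) * real k ^ i * real (n - k) ^ (n - i)" for i
  have u_nonneg: "0 \<le> u i" for i
    unfolding u_def by simp
  have pos: "0 < real (Suc i) * real (n - k)" for i
    using assms by simp
  have ratio: "u (Suc i) * (real (Suc i) * real (n - k)) = u i * (real k * real (n - i))" if "i < n" for i
    unfolding u_def using that by (rule binomial_term_Suc)
  have "u j \<le> u k" if "j \<le> n"
  proof (rule le_peak_if_unimodal[OF _ _ that])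
    fix i assume "i < k"
    then have "real (Suc i) * real (n - k) \<le> real k * real (n - i)"
      by (simp only: of_nat_mult[symmetric] of_nat_le_iff) (intro mult_le_mono; simp)
    then have "u i * (real (Suc i) * real (n - k)) \<le> u (Suc i) * (real (Suc i) * real (n - k))"
      unfolding ratio[OF order.strict_trans[OF \<open>i < k\<close> assms(2)]] by (intro mult_left_mono u_nonneg)
    then show "u i \<le> u (Suc i)"
      using pos by (rule mult_right_le_imp_le)
  next
    fix i assume "k \<le> i" "i < n"
    then have "real k * real (n - i) \<le> real (Suc i) * real (n - k)"
      by (simp only: of_nat_mult[symmetric] of_nat_le_iff) (intro mult_le_mono; simp)
    then have "u (Suc i) * (real (Suc i) * real (n - k)) \<le> u i * (real (Suc i) * real (n - k))"
      unfolding ratio[OF \<open>i < n\<close>] by (intro mult_left_mono u_nonneg)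
    then show "u (Suc i) \<le> u i"
      using pos by (rule mult_right_le_imp_le)
  qed
  moreover have "u j = 0" if "n < j"
    using that by (simp add: u_def binomial_eq_0)
  ultimately have "u j \<le> u k"
    using u_nonneg[of k] by (cases "j \<le> n") (simp_all add: not_le)
  then show ?thesis
    unfolding u_def .
qed

lemma binomial_peak_term_bounds:
  fixes n k :: nat
  assumes "0 < k" "k < n"
  defines "t \<equiv> real (n choose k) * real k ^ k * real (n - k) ^ (n - k)"
  shows "t \<le> real n ^ n" and "real n ^ n \<le> real (Suc n) * t"
proof -
  define u where "u j = real (n choose j) * real k ^ j * real (n - k) ^ (n - j)" for j
  have "real n ^ n = (real k + real (n - k)) ^ n"
    using assms by simp
  also have "\<dots> = (\<Sum>j\<le>n. u j)"
    unfolding u_def by (rule binomial_ring)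
  finally have expand: "real n ^ n = (\<Sum>j\<le>n. u j)" .
  have "u k \<le> (\<Sum>j\<le>n. u j)"
    using assms by (intro member_le_sum) (auto simp: u_def)
  then show "t \<le> real n ^ n"
    unfolding expand t_def u_def .
  have "(\<Sum>j\<le>n. u j) \<le> real (card {..n}) * t"
    unfolding t_def u_def using assms by (intro sum_bounded_above binomial_term_le_peak)
  then show "real n ^ n \<le> real (Suc n) * t"
    unfolding expand by simp
qed

lemma entropy_normalized:
  fixes xs :: "real list"
  assumes "\<forall>x\<in>set xs. 0 < x"
  shows "sum_list xs * entropy (map (\<lambda>x. x / sum_list xs) xs)
         = sum_list xs * log 2 (sum_list xs) - (\<Sum>x\<leftarrow>xs. x * log 2 x)"
proof (cases "xs = []")
  case False
  define s where "s = sum_list xs"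
  have "0 < s"
    unfolding s_def using assms False
    by (induction xs) (fastforce intro: add_pos_nonneg sum_list_nonneg less_imp_le)+
  have "s * (\<Sum>x\<leftarrow>ys. x / s * log 2 (1 / (x / s))) = (\<Sum>x\<leftarrow>ys. x * log 2 s - x * log 2 x)"
    if "\<forall>x\<in>set ys. 0 < x" for ys
    using that \<open>0 < s\<close> by (induction ys) (auto simp: distrib_left log_divide field_simps)
  from this[OF assms] show ?thesis
    unfolding entropy_def s_def by (simp add: o_def sum_list_subtractf sum_list_mult_const)
qed (simp add: entropy_def)

lemma entropy_binary_scaled:
  fixes n k :: nat
  assumes "0 < k" "k < n"
  shows "real n * entropy [real k / real n, 1 - real k / real n]
         = real n * log 2 (real n) - real k * log 2 (real k) - real (n - k) * log 2 (real (n - k))"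
proof -
  have "1 - real k / real n = real (n - k) / real n"
    using assms by (simp add: of_nat_diff field_simps)
  then show ?thesis
    using entropy_normalized[of "[real k, real (n - k)]"] assms by (simp add: of_nat_diff)
qed

lemma entropy_grouping:
  fixes n k0 k1 :: nat
  assumes "0 < k0" "0 < k1" "k0 + k1 < n"
  shows "real n * entropy [real k0 / real n, real k1 / real n, 1 - real k0 / real n - real k1 / real n]
         = real n * entropy [real k0 / real n, 1 - real k0 / real n]
           + real (n - k0) * entropy [real k1 / real (n - k0), 1 - real k1 / real (n - k0)]"
proof -
  have "1 - real k0 / real n - real k1 / real n = real (n - k0 - k1) / real n"
    using assms by (simp add: of_nat_diff field_simps)
  then have "real n * entropy [real k0 / real n, real k1 / real n, 1 - real k0 / real n - real k1 / real n]
      = real n * log 2 (real n) - real k0 * log 2 (real k0) - real k1 * log 2 (real k1)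
        - real (n - k0 - k1) * log 2 (real (n - k0 - k1))"
    using entropy_normalized[of "[real k0, real k1, real (n - k0 - k1)]"] assms
    by (simp add: of_nat_diff)
  moreover note entropy_binary_scaled[of k0 n] entropy_binary_scaled[of k1 "n - k0"]
  ultimately show ?thesis
    using assms by simp
qed

lemma log_binomial_entropy_bounds:
  fixes n k :: nat
  assumes "0 < k" "k < n"
  shows "log 2 (real (n choose k)) \<le> real n * entropy [real k / real n, 1 - real k / real n]"
    and "real n * entropy [real k / real n, 1 - real k / real n]
         \<le> log 2 (real (n choose k)) + log 2 (real (Suc n))"
proof -
  define t where "t = real (n choose k) * real k ^ k * real (n - k) ^ (n - k)"
  have "0 < real (n choose k)"
    using assms by simp
  then have "0 < t" and log_t:
    "log 2 t = log 2 (real (n choose k)) + real k * log 2 (real k) + real (n - k) * log 2 (real (n - k))"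
    unfolding t_def using assms by (simp_all add: log_mult log_nat_power)
  have log_nn: "log 2 (real n ^ n) = real n * log 2 (real n)"
    by (simp add: log_nat_power)
  have "log 2 t \<le> log 2 (real n ^ n)"
    using binomial_peak_term_bounds(1)[OF assms] \<open>0 < t\<close> unfolding t_def
    by (intro log_mono) simp_all
  then show "log 2 (real (n choose k)) \<le> real n * entropy [real k / real n, 1 - real k / real n]"
    unfolding log_t log_nn entropy_binary_scaled[OF assms] by simp
  have "log 2 (real n ^ n) \<le> log 2 (real (Suc n) * t)"
    using binomial_peak_term_bounds(2)[OF assms] assms unfolding t_def
    by (intro log_mono) simp_all
  also have "\<dots> = log 2 (real (Suc n)) + log 2 t"
    using \<open>0 < t\<close> by (simp add: log_mult)
  finally show "real n * entropy [real k / real n, 1 - real k / real n]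
      \<le> log 2 (real (n choose k)) + log 2 (real (Suc n))"
    unfolding log_t log_nn entropy_binary_scaled[OF assms] by simp
qed

lemma log_trinomial_entropy_bounds:
  fixes n k0 k1 :: nat
  assumes "0 < k0" "0 < k1" "k0 + k1 < n"
  defines "h \<equiv> entropy [real k0 / real n, real k1 / real n, 1 - real k0 / real n - real k1 / real n]"
  shows "log 2 (real ((n choose k0) * (n - k0 choose k1))) \<le> real n * h"
    and "real n * h \<le> log 2 (real ((n choose k0) * (n - k0 choose k1))) + 2 * log 2 (real (Suc n))"
proof -
  have k0: "0 < k0" "k0 < n" and k1: "0 < k1" "k1 < n - k0"
    using assms by auto
  have split: "log 2 (real ((n choose k0) * (n - k0 choose k1)))
      = log 2 (real (n choose k0)) + log 2 (real (n - k0 choose k1))"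
    using k0 k1 by (simp add: log_mult)
  have "real n * h = real n * entropy [real k0 / real n, 1 - real k0 / real n]
      + real (n - k0) * entropy [real k1 / real (n - k0), 1 - real k1 / real (n - k0)]"
    unfolding h_def by (rule entropy_grouping[OF assms(1-3)])
  moreover note log_binomial_entropy_bounds[OF k0] log_binomial_entropy_bounds[OF k1]
  moreover have "log 2 (real (Suc (n - k0))) \<le> log 2 (real (Suc n))"
    by simp
  ultimately show "log 2 (real ((n choose k0) * (n - k0 choose k1))) \<le> real n * h"
    and "real n * h \<le> log 2 (real ((n choose k0) * (n - k0 choose k1))) + 2 * log 2 (real (Suc n))"
    unfolding split by linarith+
qed

section \<open>Counting functions with prescribed blocks and fibres\<close>

definition block_index :: "('k \<Rightarrow> 'a set) \<Rightarrow> 'k set \<Rightarrow> 'a \<Rightarrow> 'k" where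
  "block_index B K x = (SOME k. k \<in> K \<and> x \<in> B k)"

lemma block_index_eq:
  assumes "disjoint_family_on B K" "k \<in> K" "x \<in> B k"
  shows "block_index B K x = k"
proof -
  have "block_index B K x \<in> K \<and> x \<in> B (block_index B K x)"
    unfolding block_index_def by (rule someI[where x = k]) (use assms in simp)
  then show ?thesis
    using assms unfolding disjoint_family_on_def by blast
qed

lemma bij_betw_restrict_blocks:
  assumes disj: "disjoint_family_on B K" and I: "I = (\<Union>k\<in>K. B k)"
  shows "bij_betw (\<lambda>f. \<lambda>k\<in>K. restrict f (B k)) (I \<rightarrow>\<^sub>E V) (\<Pi>\<^sub>E k\<in>K. B k \<rightarrow>\<^sub>E V)"
proof (rule bij_betw_byWitness[where f' = "\<lambda>h. \<lambda>x\<in>I. h (block_index B K x) x"])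
  note block = block_index_eq[OF disj]
  show "\<forall>f\<in>I \<rightarrow>\<^sub>E V. (\<lambda>x\<in>I. (\<lambda>k\<in>K. restrict f (B k)) (block_index B K x) x) = f"
  proof
    fix f assume f: "f \<in> I \<rightarrow>\<^sub>E V"
    have "(\<lambda>x\<in>I. (\<lambda>k\<in>K. restrict f (B k)) (block_index B K x) x) x = f x" for x
      using I block PiE_arb[OF f, of x] by (cases "x \<in> I") auto
    then show "(\<lambda>x\<in>I. (\<lambda>k\<in>K. restrict f (B k)) (block_index B K x) x) = f" ..
  qed
  show "\<forall>h\<in>\<Pi>\<^sub>E k\<in>K. B k \<rightarrow>\<^sub>E V. (\<lambda>k\<in>K. restrict (\<lambda>x\<in>I. h (block_index B K x) x) (B k)) = h"
  proof
    fix h assume h: "h \<in> (\<Pi>\<^sub>E k\<in>K. B k \<rightarrow>\<^sub>E V)"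
    have "restrict (\<lambda>x\<in>I. h (block_index B K x) x) (B k) x = h k x" if "k \<in> K" for k x
      using I block that PiE_arb[OF PiE_mem[OF h that], of x] by auto
    then show "(\<lambda>k\<in>K. restrict (\<lambda>x\<in>I. h (block_index B K x) x) (B k)) = h"
      using PiE_arb[OF h] by (auto simp: fun_eq_iff)
  qed
  show "(\<lambda>f. \<lambda>k\<in>K. restrict f (B k)) ` (I \<rightarrow>\<^sub>E V) \<subseteq> (\<Pi>\<^sub>E k\<in>K. B k \<rightarrow>\<^sub>E V)"
    using I by (auto simp: restrict_PiE_iff dest: PiE_mem)
  show "(\<lambda>h. \<lambda>x\<in>I. h (block_index B K x) x) ` (\<Pi>\<^sub>E k\<in>K. B k \<rightarrow>\<^sub>E V) \<subseteq> I \<rightarrow>\<^sub>E V"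
  proof clarify
    fix h assume h: "h \<in> (\<Pi>\<^sub>E k\<in>K. B k \<rightarrow>\<^sub>E V)"
    have "h k x \<in> V" if "k \<in> K" "x \<in> B k" for k x
      using PiE_mem[OF PiE_mem[OF h \<open>k \<in> K\<close>] \<open>x \<in> B k\<close>] .
    then show "(\<lambda>x\<in>I. h (block_index B K x) x) \<in> I \<rightarrow>\<^sub>E V"
      unfolding restrict_PiE_iff using I block by auto
  qed
qed

lemma card_PiE_blockwise:
  assumes "finite K" "disjoint_family_on B K" "I = (\<Union>k\<in>K. B k)"
  shows "card {f \<in> I \<rightarrow>\<^sub>E V. \<forall>k\<in>K. Q k (restrict f (B k))}
         = (\<Prod>k\<in>K. card {g \<in> B k \<rightarrow>\<^sub>E V. Q k g})"
proof -
  have "bij_betw (\<lambda>f. \<lambda>k\<in>K. restrict f (B k)) {f \<in> I \<rightarrow>\<^sub>E V. \<forall>k\<in>K. Q k (restrict f (B k))}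
      {h \<in> \<Pi>\<^sub>E k\<in>K. B k \<rightarrow>\<^sub>E V. \<forall>k\<in>K. Q k (h k)}"
    by (rule bij_betw_Collect[OF bij_betw_restrict_blocks[OF assms(2,3)]]) simp
  moreover have "{h \<in> \<Pi>\<^sub>E k\<in>K. B k \<rightarrow>\<^sub>E V. \<forall>k\<in>K. Q k (h k)} = (\<Pi>\<^sub>E k\<in>K. {g \<in> B k \<rightarrow>\<^sub>E V. Q k g})"
    by (auto simp: PiE_iff intro: extensional_arb)
  ultimately show ?thesis
    using assms(1) by (simp add: bij_betw_same_card card_PiE)
qed

lemma bij_betw_fibre_split:
  assumes "u \<in> V"
  shows "bij_betw (\<lambda>g. ({x \<in> S. g x = u}, restrict g (S - {x \<in> S. g x = u})))
           (S \<rightarrow>\<^sub>E V) (SIGMA T:Pow S. S - T \<rightarrow>\<^sub>E V - {u})"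
proof (rule bij_betw_byWitness[where f' = "\<lambda>(T, h). \<lambda>x\<in>S. if x \<in> T then u else h x"])
  show "\<forall>g\<in>S \<rightarrow>\<^sub>E V. (\<lambda>(T, h). \<lambda>x\<in>S. if x \<in> T then u else h x)
      ({x \<in> S. g x = u}, restrict g (S - {x \<in> S. g x = u})) = g"
    by (auto simp: fun_eq_iff PiE_iff extensional_def)
  show "\<forall>t\<in>SIGMA T:Pow S. S - T \<rightarrow>\<^sub>E V - {u}.
      (\<lambda>g. ({x \<in> S. g x = u}, restrict g (S - {x \<in> S. g x = u})))
        ((\<lambda>(T, h). \<lambda>x\<in>S. if x \<in> T then u else h x) t) = t"
  proof
    fix t assume "t \<in> (SIGMA T:Pow S. S - T \<rightarrow>\<^sub>E V - {u})"
    then obtain T h where t: "t = (T, h)" and T: "T \<subseteq> S" and h: "h \<in> S - T \<rightarrow>\<^sub>E V - {u}"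
      by auto
    have "{x \<in> S. (\<lambda>x\<in>S. if x \<in> T then u else h x) x = u} = T"
      using T h by (auto simp: PiE_iff)
    moreover have "restrict (\<lambda>x\<in>S. if x \<in> T then u else h x) (S - T) = h"
      using h by (auto simp: fun_eq_iff PiE_iff extensional_def)
    ultimately show "(\<lambda>g. ({x \<in> S. g x = u}, restrict g (S - {x \<in> S. g x = u})))
        ((\<lambda>(T, h). \<lambda>x\<in>S. if x \<in> T then u else h x) t) = t"
      unfolding t by simp
  qed
  show "(\<lambda>g. ({x \<in> S. g x = u}, restrict g (S - {x \<in> S. g x = u}))) ` (S \<rightarrow>\<^sub>E V)
      \<subseteq> (SIGMA T:Pow S. S - T \<rightarrow>\<^sub>E V - {u})"
  proof (rule image_subsetI)
    fix g assume g: "g \<in> S \<rightarrow>\<^sub>E V"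
    have "restrict g (S - {x \<in> S. g x = u}) \<in> S - {x \<in> S. g x = u} \<rightarrow>\<^sub>E V - {u}"
      unfolding restrict_PiE_iff using PiE_mem[OF g] by auto
    then show "({x \<in> S. g x = u}, restrict g (S - {x \<in> S. g x = u}))
        \<in> (SIGMA T:Pow S. S - T \<rightarrow>\<^sub>E V - {u})"
      by auto
  qed
  show "(\<lambda>(T, h). \<lambda>x\<in>S. if x \<in> T then u else h x) ` (SIGMA T:Pow S. S - T \<rightarrow>\<^sub>E V - {u})
      \<subseteq> S \<rightarrow>\<^sub>E V"
    using assms by (auto simp: PiE_iff)
qed

lemma card_PiE_fibre_split:
  assumes "finite S" "finite V" "u \<in> V"
  shows "card {g \<in> S \<rightarrow>\<^sub>E V. card {x \<in> S. g x = u} = k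
                \<and> R (S - {x \<in> S. g x = u}) (restrict g (S - {x \<in> S. g x = u}))}
         = (\<Sum>T | T \<subseteq> S \<and> card T = k. card {h \<in> S - T \<rightarrow>\<^sub>E V - {u}. R (S - T) h})"
proof -
  have "bij_betw (\<lambda>g. ({x \<in> S. g x = u}, restrict g (S - {x \<in> S. g x = u})))
      {g \<in> S \<rightarrow>\<^sub>E V. card {x \<in> S. g x = u} = k
         \<and> R (S - {x \<in> S. g x = u}) (restrict g (S - {x \<in> S. g x = u}))}
      {t \<in> SIGMA T:Pow S. S - T \<rightarrow>\<^sub>E V - {u}. card (fst t) = k \<and> R (S - fst t) (snd t)}"
    by (rule bij_betw_Collect[OF bij_betw_fibre_split[OF assms(3)]]) simp
  moreover have "{t \<in> SIGMA T:Pow S. S - T \<rightarrow>\<^sub>E V - {u}. card (fst t) = k \<and> R (S - fst t) (snd t)}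
      = (SIGMA T:{T. T \<subseteq> S \<and> card T = k}. {h \<in> S - T \<rightarrow>\<^sub>E V - {u}. R (S - T) h})"
    by auto
  ultimately show ?thesis
    using assms by (simp add: bij_betw_same_card finite_PiE)
qed

lemma card_PiE_fibre:
  assumes "finite S" "finite V" "u \<in> V"
  shows "card {g \<in> S \<rightarrow>\<^sub>E V. card {x \<in> S. g x = u} = k} = (card S choose k) * (card V - 1) ^ (card S - k)"
proof -
  have "card {g \<in> S \<rightarrow>\<^sub>E V. card {x \<in> S. g x = u} = k}
      = (\<Sum>T | T \<subseteq> S \<and> card T = k. card (S - T \<rightarrow>\<^sub>E V - {u}))"
    using card_PiE_fibre_split[OF assms, where R = "\<lambda>_ _. True"] by simp
  also have "\<dots> = (\<Sum>T | T \<subseteq> S \<and> card T = k. (card V - 1) ^ (card S - k))"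
    using assms by (intro sum.cong refl) (auto simp: card_PiE card_Diff_subset finite_subset)
  also have "\<dots> = (card S choose k) * (card V - 1) ^ (card S - k)"
    using assms(1) by (simp add: n_subsets)
  finally show ?thesis .
qed

lemma card_PiE_two_fibres:
  assumes "finite S" "finite V" "u \<in> V" "v \<in> V" "u \<noteq> v"
  shows "card {g \<in> S \<rightarrow>\<^sub>E V. card {x \<in> S. g x = u} = k0 \<and> card {x \<in> S. g x = v} = k1}
         = (card S choose k0) * (card S - k0 choose k1) * (card V - 2) ^ (card S - k0 - k1)"
proof -
  let ?R = "\<lambda>D h. card {x \<in> D. h x = v} = k1"
  have "{x \<in> S - {x \<in> S. g x = u}. restrict g (S - {x \<in> S. g x = u}) x = v} = {x \<in> S. g x = v}" for g
    using assms(5) by auto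
  then have "card {g \<in> S \<rightarrow>\<^sub>E V. card {x \<in> S. g x = u} = k0 \<and> card {x \<in> S. g x = v} = k1}
      = (\<Sum>T | T \<subseteq> S \<and> card T = k0. card {h \<in> S - T \<rightarrow>\<^sub>E V - {u}. ?R (S - T) h})"
    using card_PiE_fibre_split[OF assms(1-3), where R = ?R] by simp
  also have "\<dots> = (\<Sum>T | T \<subseteq> S \<and> card T = k0. (card S - k0 choose k1) * (card V - 2) ^ (card S - k0 - k1))"
  proof (intro sum.cong refl)
    fix T assume "T \<in> {T. T \<subseteq> S \<and> card T = k0}"
    then have "card (S - T) = card S - k0"
      using assms(1) by (auto simp: card_Diff_subset finite_subset)
    moreover have "card (V - {u}) - 1 = card V - 2"
      using assms(2,3) by simp
    ultimately show "card {h \<in> S - T \<rightarrow>\<^sub>E V - {u}. ?R (S - T) h}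
        = (card S - k0 choose k1) * (card V - 2) ^ (card S - k0 - k1)"
      using card_PiE_fibre[of "S - T" "V - {u}" v k1] assms by simp
  qed
  also have "\<dots> = (card S choose k0) * (card S - k0 choose k1) * (card V - 2) ^ (card S - k0 - k1)"
    using assms(1) by (simp add: n_subsets)
  finally show ?thesis .
qed

lemma bij_betw_zip_PiE:
  "bij_betw (\<lambda>(f, g). \<lambda>x\<in>I. (f x, g x)) ((I \<rightarrow>\<^sub>E A) \<times> (I \<rightarrow>\<^sub>E B)) (I \<rightarrow>\<^sub>E A \<times> B)"
proof (rule bij_betw_byWitness[where f' = "\<lambda>h. (\<lambda>x\<in>I. fst (h x), \<lambda>x\<in>I. snd (h x))"])
  show "\<forall>fg\<in>(I \<rightarrow>\<^sub>E A) \<times> (I \<rightarrow>\<^sub>E B).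
      (\<lambda>h. (\<lambda>x\<in>I. fst (h x), \<lambda>x\<in>I. snd (h x))) ((\<lambda>(f, g). \<lambda>x\<in>I. (f x, g x)) fg) = fg"
    by (auto simp: fun_eq_iff PiE_iff extensional_def)
  show "\<forall>h\<in>I \<rightarrow>\<^sub>E A \<times> B.
      (\<lambda>(f, g). \<lambda>x\<in>I. (f x, g x)) ((\<lambda>h. (\<lambda>x\<in>I. fst (h x), \<lambda>x\<in>I. snd (h x))) h) = h"
    by (auto simp: fun_eq_iff PiE_iff extensional_def)
qed (auto simp: PiE_iff mem_Times_iff)

section \<open>Counting admixed arrays\<close>

definition row_cells :: "nat \<Rightarrow> nat \<Rightarrow> (nat \<times> nat) set" where
  "row_cells P n = {n} \<times> {0..<2 * P}"

definition locus_cells :: "nat \<Rightarrow> nat \<Rightarrow> nat \<Rightarrow> (nat \<times> nat) set" where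
  "locus_cells N P p = {0..<N} \<times> {p, P + p}"

lemma cells_eq_UN_row_cells: "{0..<N} \<times> {0..<2 * P} = (\<Union>n\<in>{..<N}. row_cells P n)"
  by (auto simp: row_cells_def)

lemma disjoint_family_row_cells: "disjoint_family_on (row_cells P) K"
  by (auto simp: disjoint_family_on_def row_cells_def)

lemma cells_eq_UN_locus_cells: "{0..<N} \<times> {0..<2 * P} = (\<Union>p\<in>{..<P}. locus_cells N P p)"
proof (intro equalityI subsetI)
  fix x assume "x \<in> {0..<N} \<times> {0..<2 * P}"
  then obtain n j where x: "x = (n, j)" "n < N" "j < 2 * P"
    by auto
  then have "x \<in> locus_cells N P (if j < P then j else j - P)"
    by (auto simp: locus_cells_def)
  then show "x \<in> (\<Union>p\<in>{..<P}. locus_cells N P p)"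
    using x by (intro UN_I[of "if j < P then j else j - P"]) auto
qed (auto simp: locus_cells_def)

lemma disjoint_family_locus_cells: "disjoint_family_on (locus_cells N P) {..<P}"
  by (auto simp: disjoint_family_on_def locus_cells_def)

lemma sum_binary_eq_card:
  assumes "finite S" "\<And>x. x \<in> S \<Longrightarrow> f x \<in> {0, 1}"
  shows "(\<Sum>x\<in>S. int (f x)) = int (card {x \<in> S. f x = 1})"
proof -
  have "(\<Sum>x\<in>S. int (f x)) = (\<Sum>x\<in>S. of_bool (f x = 1))"
    using assms(2) by (intro sum.cong) auto
  then show ?thesis
    using assms(1) by (simp add: Collect_conj_eq Int_commute)
qed

lemma bin_arrays_binary: "A \<in> bin_arrays N P \<Longrightarrow> x \<in> {0..<N} \<times> {0..<2 * P} \<Longrightarrow> A x \<in> {0, 1}"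
  unfolding bin_arrays_def by (rule PiE_mem)

lemma row_tally_eq_card:
  assumes "A \<in> bin_arrays N P" "n < N"
  shows "row_tally P A n = int (card {x \<in> row_cells P n. A x = 1})"
proof -
  have "row_cells P n = Pair n ` {..<2 * P}"
    by (auto simp: row_cells_def)
  then have "(\<Sum>x\<in>row_cells P n. int (A x)) = row_tally P A n"
    by (simp add: sum.reindex inj_on_def row_tally_def)
  moreover have "row_cells P n \<subseteq> {0..<N} \<times> {0..<2 * P}"
    using assms(2) by (auto simp: row_cells_def)
  ultimately show ?thesis
    using bin_arrays_binary[OF assms(1)]
    by (subst (asm) sum_binary_eq_card) (auto simp: row_cells_def)
qed

lemma sum_locus_cells:
  fixes t :: "nat \<times> nat \<Rightarrow> int"
  assumes "p < P"
  shows "(\<Sum>x\<in>locus_cells N P p. t x) = (\<Sum>n<N. t (n, p) + t (n, P + p))"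
proof -
  have "(\<Sum>x\<in>locus_cells N P p. t x) = (\<Sum>n<N. \<Sum>j\<in>{p, P + p}. t (n, j))"
    by (simp add: locus_cells_def sum.cartesian_product atLeast0LessThan)
  then show ?thesis
    using assms by simp
qed

lemma Phi_eq_card:
  assumes A: "A \<in> bin_arrays N P" and X: "X \<in> bin_arrays N P" and "p < P"
  shows "Phi0 N P A X p = int (card {x \<in> locus_cells N P p. (A x, X x) = (0, 1)})"
    and "Phi1 N P A X p = int (card {x \<in> locus_cells N P p. (A x, X x) = (1, 1)})"
proof -
  have binary: "A x \<in> {0, 1}" "X x \<in> {0, 1}" if "x \<in> locus_cells N P p" for x
  proof -
    have "x \<in> {0..<N} \<times> {0..<2 * P}"
      using that \<open>p < P\<close> by (auto simp: locus_cells_def)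
    then show "A x \<in> {0, 1}" "X x \<in> {0, 1}"
      by (rule bin_arrays_binary[OF A], rule bin_arrays_binary[OF X])
  qed
  have "Phi0 N P A X p = (\<Sum>x\<in>locus_cells N P p. (1 - int (A x)) * int (X x))"
    unfolding Phi0_def using \<open>p < P\<close> by (simp add: sum_locus_cells)
  also have "\<dots> = (\<Sum>x\<in>locus_cells N P p. of_bool ((A x, X x) = (0, 1)))"
    by (intro sum.cong refl, frule binary(1), drule binary(2)) auto
  finally show "Phi0 N P A X p = int (card {x \<in> locus_cells N P p. (A x, X x) = (0, 1)})"
    by (simp add: locus_cells_def Collect_conj_eq Int_commute)
  have "Phi1 N P A X p = (\<Sum>x\<in>locus_cells N P p. int (A x) * int (X x))"
    unfolding Phi1_def using \<open>p < P\<close> by (simp add: sum_locus_cells)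
  also have "\<dots> = (\<Sum>x\<in>locus_cells N P p. of_bool ((A x, X x) = (1, 1)))"
    by (intro sum.cong refl, frule binary(1), drule binary(2)) auto
  finally show "Phi1 N P A X p = int (card {x \<in> locus_cells N P p. (A x, X x) = (1, 1)})"
    by (simp add: locus_cells_def Collect_conj_eq Int_commute)
qed

lemma card_bin_arrays: "card (bin_arrays N P) = 2 ^ (2 * N * P)"
  by (simp add: bin_arrays_def card_PiE card_cartesian_product algebra_simps numeral_2_eq_2)

lemma card_scrA1:
  assumes "\<forall>n<N. 0 \<le> a n"
  shows "card (scrA1 N P a) = 2 ^ (2 * N * P) * (\<Prod>n<N. 2 * P choose nat (a n))"
proof -
  let ?Q = "\<lambda>n g. card {x \<in> row_cells P n. g x = (1::nat)} = nat (a n)"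
  let ?rows = "{A \<in> {0..<N} \<times> {0..<2 * P} \<rightarrow>\<^sub>E {0, 1}. \<forall>n\<in>{..<N}. ?Q n (restrict A (row_cells P n))}"
  have tally_iff: "row_tally P A n = a n \<longleftrightarrow> ?Q n (restrict A (row_cells P n))"
    if "A \<in> bin_arrays N P" "n < N" for A n
  proof -
    have "{x \<in> row_cells P n. restrict A (row_cells P n) x = 1} = {x \<in> row_cells P n. A x = 1}"
      by auto
    moreover have "0 \<le> a n"
      using assms that by simp
    ultimately show ?thesis
      unfolding row_tally_eq_card[OF that] by auto
  qed
  have "?rows = {A \<in> bin_arrays N P. \<forall>n<N. row_tally P A n = a n}"
    unfolding bin_arrays_def[symmetric]
  proof (intro Collect_cong conj_cong refl)
    fix A assume "A \<in> bin_arrays N P"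
    then show "(\<forall>n\<in>{..<N}. ?Q n (restrict A (row_cells P n))) \<longleftrightarrow> (\<forall>n<N. row_tally P A n = a n)"
      using tally_iff by (simp add: Ball_def)
  qed
  then have "scrA1 N P a = ?rows \<times> bin_arrays N P"
    by (auto simp: scrA1_def admixed_arrays_def)
  then have "card (scrA1 N P a) = card ?rows * 2 ^ (2 * N * P)"
    by (simp only: card_cartesian_product card_bin_arrays)
  also have "card ?rows = (\<Prod>n<N. card {g \<in> row_cells P n \<rightarrow>\<^sub>E {0, 1}. ?Q n g})"
    by (intro card_PiE_blockwise cells_eq_UN_row_cells disjoint_family_row_cells) simp
  also have "\<dots> = (\<Prod>n<N. 2 * P choose nat (a n))"
    by (intro prod.cong refl)
      (simp add: card_PiE_fibre row_cells_def card_cartesian_product)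
  finally show ?thesis
    by simp
qed

lemma card_locus_cells: "p < P \<Longrightarrow> card (locus_cells N P p) = 2 * N"
  by (simp add: locus_cells_def card_cartesian_product)

text \<open>Merging A and X into one array with entries in {0,1}^2 turns the dosage constraints
  into prescribed fibre sizes on each locus.\<close>

definition pair_array :: "nat \<Rightarrow> nat \<Rightarrow> (nat \<times> nat \<Rightarrow> nat) \<times> (nat \<times> nat \<Rightarrow> nat) \<Rightarrow> nat \<times> nat \<Rightarrow> nat \<times> nat"
  where "pair_array N P = (\<lambda>(A, X). \<lambda>x\<in>{0..<N} \<times> {0..<2 * P}. (A x, X x))"

lemma bij_betw_pair_array_scrA2:
  fixes N P :: nat and phi0 phi1 :: "nat \<Rightarrow> int"
  assumes "\<forall>p<P. 0 \<le> phi0 p \<and> 0 \<le> phi1 p"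
  defines "Q \<equiv> \<lambda>p g. card {x \<in> locus_cells N P p. g x = (0::nat, 1::nat)} = nat (phi0 p)
                    \<and> card {x \<in> locus_cells N P p. g x = (1, 1)} = nat (phi1 p)"
  shows "bij_betw (pair_array N P) (scrA2 N P phi0 phi1)
           {g \<in> {0..<N} \<times> {0..<2 * P} \<rightarrow>\<^sub>E {0, 1} \<times> {0, 1}. \<forall>p\<in>{..<P}. Q p (restrict g (locus_cells N P p))}"
proof -
  have dosage_iff: "Phi0 N P A X p = phi0 p \<and> Phi1 N P A X p = phi1 p
      \<longleftrightarrow> Q p (restrict (pair_array N P (A, X)) (locus_cells N P p))"
    if "A \<in> bin_arrays N P" "X \<in> bin_arrays N P" "p < P" for A X p
  proof -
    have "locus_cells N P p \<subseteq> {0..<N} \<times> {0..<2 * P}"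
      using \<open>p < P\<close> by (auto simp: locus_cells_def)
    then have "{x \<in> locus_cells N P p. restrict (pair_array N P (A, X)) (locus_cells N P p) x = c}
        = {x \<in> locus_cells N P p. (A x, X x) = c}" for c
      by (auto simp: pair_array_def)
    moreover have "0 \<le> phi0 p" "0 \<le> phi1 p"
      using assms that by auto
    ultimately show ?thesis
      unfolding Phi_eq_card[OF that] Q_def by auto
  qed
  have scrA2_eq: "scrA2 N P phi0 phi1 = {AX \<in> bin_arrays N P \<times> bin_arrays N P.
      case AX of (A, X) \<Rightarrow> \<forall>p<P. Phi0 N P A X p = phi0 p \<and> Phi1 N P A X p = phi1 p}"
    by (auto simp: scrA2_def admixed_arrays_def)
  show ?thesis
    unfolding pair_array_def scrA2_eq
  proof (rule bij_betw_Collect[OF bij_betw_zip_PiE[of "{0..<N} \<times> {0..<2 * P}" "{0::nat, 1}" "{0::nat, 1}",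
        folded bin_arrays_def]])
    fix AX assume "AX \<in> bin_arrays N P \<times> bin_arrays N P"
    then obtain A X where AX: "AX = (A, X)" "A \<in> bin_arrays N P" "X \<in> bin_arrays N P"
      by blast
    show "(\<forall>p\<in>{..<P}. Q p (restrict ((\<lambda>(A, X). \<lambda>x\<in>{0..<N} \<times> {0..<2 * P}. (A x, X x)) AX) (locus_cells N P p)))
        \<longleftrightarrow> (case AX of (A, X) \<Rightarrow> \<forall>p<P. Phi0 N P A X p = phi0 p \<and> Phi1 N P A X p = phi1 p)"
      unfolding AX(1) prod.case Ball_def lessThan_iff
      by (intro all_cong1 imp_cong refl) (rule dosage_iff[OF AX(2,3), unfolded pair_array_def prod.case, symmetric])
  qed
qed

lemma card_scrA2:
  assumes "\<forall>p<P. 0 \<le> phi0 p \<and> 0 \<le> phi1 p"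
  shows "card (scrA2 N P phi0 phi1) = (\<Prod>p<P. (2 * N choose nat (phi0 p))
           * (2 * N - nat (phi0 p) choose nat (phi1 p)) * 2 ^ (2 * N - nat (phi0 p) - nat (phi1 p)))"
proof -
  let ?Q = "\<lambda>p g. card {x \<in> locus_cells N P p. g x = (0::nat, 1::nat)} = nat (phi0 p)
                 \<and> card {x \<in> locus_cells N P p. g x = (1, 1)} = nat (phi1 p)"
  have "card (scrA2 N P phi0 phi1) = card {g \<in> {0..<N} \<times> {0..<2 * P} \<rightarrow>\<^sub>E {0, 1} \<times> {0, 1}.
      \<forall>p\<in>{..<P}. ?Q p (restrict g (locus_cells N P p))}"
    using bij_betw_pair_array_scrA2[OF assms] by (rule bij_betw_same_card)
  also have "\<dots> = (\<Prod>p<P. card {g \<in> locus_cells N P p \<rightarrow>\<^sub>E {0, 1} \<times> {0, 1}. ?Q p g})"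
    by (intro card_PiE_blockwise cells_eq_UN_locus_cells disjoint_family_locus_cells) simp
  also have "\<dots> = (\<Prod>p<P. (2 * N choose nat (phi0 p))
           * (2 * N - nat (phi0 p) choose nat (phi1 p)) * 2 ^ (2 * N - nat (phi0 p) - nat (phi1 p)))"
    by (intro prod.cong refl, subst card_PiE_two_fibres)
      (auto simp: card_locus_cells card_cartesian_product locus_cells_def mult_2 numeral_2_eq_2)
  finally show ?thesis .
qed

section \<open>Entropy estimates for the two counts\<close>

lemma log_prod:
  fixes f :: "'a \<Rightarrow> real"
  assumes "finite S" "\<And>i. i \<in> S \<Longrightarrow> 0 < f i"
  shows "log b (\<Prod>i\<in>S. f i) = (\<Sum>i\<in>S. log b (f i))"
proof -
  have "ln (\<Prod>i\<in>S. f i) = (\<Sum>i\<in>S. ln (f i))"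
    using assms by (intro ln_prod) (auto dest: less_imp_neq[symmetric])
  then show ?thesis
    by (simp add: log_def sum_divide_distrib)
qed

lemma log_prod_bounds:
  fixes f e :: "'a \<Rightarrow> real"
  assumes "finite S" "\<And>i. i \<in> S \<Longrightarrow> 0 < f i"
    and "\<And>i. i \<in> S \<Longrightarrow> e i - c \<le> log b (f i)" "\<And>i. i \<in> S \<Longrightarrow> log b (f i) \<le> e i"
  shows "(\<Sum>i\<in>S. e i) - real (card S) * c \<le> log b (\<Prod>i\<in>S. f i)"
    and "log b (\<Prod>i\<in>S. f i) \<le> (\<Sum>i\<in>S. e i)"
proof -
  have "(\<Sum>i\<in>S. e i - c) \<le> (\<Sum>i\<in>S. log b (f i))"
    using assms(3) by (rule sum_mono)
  then show "(\<Sum>i\<in>S. e i) - real (card S) * c \<le> log b (\<Prod>i\<in>S. f i)"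
    using assms(1,2) by (simp add: log_prod sum_subtractf)
  show "log b (\<Prod>i\<in>S. f i) \<le> (\<Sum>i\<in>S. e i)"
    using assms by (simp add: log_prod sum_mono)
qed

lemma log_card_scrA1_bounds:
  assumes "\<forall>n<N. 0 < a n \<and> a n < 2 * int P"
  defines "M \<equiv> 2 * real N * real P"
  shows "0 < card (scrA1 N P a)"
    and "log 2 (card (scrA1 N P a)) \<le> M * (1 + H1 N P a)"
    and "M * (1 + H1 N P a) - real N * log 2 (2 * real P + 1) \<le> log 2 (card (scrA1 N P a))"
proof -
  define k where "k n = nat (a n)" for n
  define e where "e n = 2 * real P * entropy [abar P a n, 1 - abar P a n]" for n
  have k: "0 < k n" "k n < 2 * P" if "n \<in> {..<N}" for n
    using assms that unfolding k_def by auto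
  have abar: "abar P a n = real (k n) / real (2 * P)" if "n \<in> {..<N}" for n
    using assms that unfolding abar_def k_def by auto
  have row: "0 < real (2 * P choose k n)" "e n - log 2 (2 * real P + 1) \<le> log 2 (real (2 * P choose k n))"
    "log 2 (real (2 * P choose k n)) \<le> e n" if "n \<in> {..<N}" for n
    using k[OF that] log_binomial_entropy_bounds[OF k[OF that]] unfolding e_def abar[OF that]
    by (simp_all add: add.commute)
  have card: "real (card (scrA1 N P a)) = 2 ^ (2 * N * P) * (\<Prod>n<N. real (2 * P choose k n))"
  proof -
    have "\<forall>n<N. 0 \<le> a n"
      using assms by auto
    then show ?thesis
      unfolding k_def by (simp add: card_scrA1)
  qed
  have prod_pos: "0 < (\<Prod>n<N. real (2 * P choose k n))"
    using row(1) by (intro prod_pos) auto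
  then have "0 < real (card (scrA1 N P a))"
    unfolding card by simp
  then show "0 < card (scrA1 N P a)"
    by simp
  have log_card: "log 2 (card (scrA1 N P a)) = M + log 2 (\<Prod>n<N. real (2 * P choose k n))"
    unfolding card M_def using prod_pos by (subst log_mult_pos) (simp_all add: log_nat_power)
  have sum_e: "(\<Sum>n<N. e n) = M * H1 N P a"
    unfolding M_def H1_def e_def by (cases "N = 0") (simp_all add: sum_distrib_left mult.assoc)
  have "(\<Sum>n<N. e n) - real (card {..<N}) * log 2 (2 * real P + 1) \<le> log 2 (\<Prod>n<N. real (2 * P choose k n))"
    by (rule log_prod_bounds(1)) (use row in auto)
  then show "M * (1 + H1 N P a) - real N * log 2 (2 * real P + 1) \<le> log 2 (card (scrA1 N P a))"
    unfolding log_card sum_e by (simp add: algebra_simps)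
  have "log 2 (\<Prod>n<N. real (2 * P choose k n)) \<le> (\<Sum>n<N. e n)"
    by (rule log_prod_bounds(2)) (use row in auto)
  then show "log 2 (card (scrA1 N P a)) \<le> M * (1 + H1 N P a)"
    unfolding log_card sum_e by (simp add: algebra_simps)
qed

lemma log_locus_count_bounds:
  fixes n k0 k1 :: nat
  assumes "0 < k0" "0 < k1" "k0 + k1 < n"
  defines "e \<equiv> real n * (1 + entropy [real k0 / real n, real k1 / real n, 1 - real k0 / real n - real k1 / real n]
                             - (real k0 / real n + real k1 / real n))"
    and "c \<equiv> (n choose k0) * (n - k0 choose k1) * 2 ^ (n - k0 - k1)"
  shows "0 < c" and "e - 2 * log 2 (real (Suc n)) \<le> log 2 (real c)" and "log 2 (real c) \<le> e"
proof -
  have "0 < (n choose k0) * (n - k0 choose k1)"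
    using assms(1-3) by simp
  then show "0 < c"
    unfolding c_def by simp
  have "log 2 (real c) = log 2 (real ((n choose k0) * (n - k0 choose k1))) + real (n - k0 - k1)"
    using \<open>0 < (n choose k0) * (n - k0 choose k1)\<close> unfolding c_def
    by (simp add: log_mult_pos log_nat_power)
  moreover have "real (n - k0 - k1) = real n * (1 - (real k0 / real n + real k1 / real n))"
    using assms(1-3) by (simp add: of_nat_diff field_simps)
  moreover note log_trinomial_entropy_bounds[OF assms(1-3)]
  ultimately show "e - 2 * log 2 (real (Suc n)) \<le> log 2 (real c)" "log 2 (real c) \<le> e"
    unfolding e_def by (simp_all add: algebra_simps)
qed

lemma log_card_scrA2_bounds:
  assumes "\<forall>p<P. 0 < phi0 p \<and> 0 < phi1 p \<and> phi0 p + phi1 p < 2 * int N"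
  defines "M \<equiv> 2 * real N * real P"
  shows "0 < card (scrA2 N P phi0 phi1)"
    and "log 2 (card (scrA2 N P phi0 phi1)) \<le> M * (1 + H2 N P phi0 phi1 - fbar N P phi0 phi1)"
    and "M * (1 + H2 N P phi0 phi1 - fbar N P phi0 phi1) - 2 * real P * log 2 (2 * real N + 1)
         \<le> log 2 (card (scrA2 N P phi0 phi1))"
proof -
  define k0 where "k0 p = nat (phi0 p)" for p
  define k1 where "k1 p = nat (phi1 p)" for p
  define c where "c p = (2 * N choose k0 p) * (2 * N - k0 p choose k1 p) * 2 ^ (2 * N - k0 p - k1 p)" for p
  define e where "e p = 2 * real N * (1 + entropy [freq N phi0 p, freq N phi1 p, 1 - freq N phi0 p - freq N phi1 p]
                   - (freq N phi0 p + freq N phi1 p))" for p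
  have k: "0 < k0 p" "0 < k1 p" "k0 p + k1 p < 2 * N" if "p \<in> {..<P}" for p
    using assms that unfolding k0_def k1_def by auto
  have freq: "freq N phi0 p = real (k0 p) / real (2 * N)" "freq N phi1 p = real (k1 p) / real (2 * N)"
    if "p \<in> {..<P}" for p
    using assms that unfolding freq_def k0_def k1_def by auto
  have locus: "0 < c p" "e p - 2 * log 2 (2 * real N + 1) \<le> log 2 (real (c p))" "log 2 (real (c p)) \<le> e p"
    if "p \<in> {..<P}" for p
    using log_locus_count_bounds[OF k[OF that]] unfolding c_def e_def freq[OF that]
    by (simp_all add: add.commute)
  have card: "real (card (scrA2 N P phi0 phi1)) = (\<Prod>p<P. real (c p))"
  proof -
    have "\<forall>p<P. 0 \<le> phi0 p \<and> 0 \<le> phi1 p"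
      using assms by auto
    then show ?thesis
      unfolding c_def k0_def k1_def by (simp add: card_scrA2)
  qed
  have "0 < real (card (scrA2 N P phi0 phi1))"
    unfolding card using locus(1) by (intro prod_pos) auto
  then show "0 < card (scrA2 N P phi0 phi1)"
    by simp
  have sum_e: "(\<Sum>p<P. e p) = M * (1 + H2 N P phi0 phi1 - fbar N P phi0 phi1)"
    unfolding M_def e_def H2_def fbar_def
    by (cases "P = 0") (simp_all add: sum_distrib_left sum.distrib sum_subtractf algebra_simps)
  show "log 2 (card (scrA2 N P phi0 phi1)) \<le> M * (1 + H2 N P phi0 phi1 - fbar N P phi0 phi1)"
    unfolding card sum_e[symmetric] by (rule log_prod_bounds(2)) (use locus in auto)
  have "(\<Sum>p<P. e p) - real (card {..<P}) * (2 * log 2 (2 * real N + 1)) \<le> log 2 (\<Prod>p<P. real (c p))"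
    by (rule log_prod_bounds(1)) (use locus in auto)
  then show "M * (1 + H2 N P phi0 phi1 - fbar N P phi0 phi1) - 2 * real P * log 2 (2 * real N + 1)
      \<le> log 2 (card (scrA2 N P phi0 phi1))"
    unfolding card sum_e by simp
qed

lemma sign_mismatch_bound:
  fixes x d M lo hi :: real
  assumes "0 < M" "0 \<le> lo" "0 \<le> hi" "M * d - lo \<le> x" "x \<le> M * d + hi" "(0 < x) \<noteq> (0 < d)"
  shows "- (hi / M) < d" and "d \<le> lo / M"
proof -
  have "0 < d \<Longrightarrow> 0 < M * d" "\<not> 0 < d \<Longrightarrow> M * d \<le> 0"
    using assms(1) by (simp_all add: mult_nonneg_nonpos)
  then have "- hi < M * d \<and> M * d \<le> lo"
    using assms by (cases "0 < d") linarith+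
  then show "- (hi / M) < d" "d \<le> lo / M"
    using assms(1) by (auto simp: field_simps)
qed

lemma entropy_gap_bounds:
  assumes "0 < N" "0 < P"
    and "\<forall>n<N. 0 < a n \<and> a n < 2 * int P"
    and "\<forall>p<P. 0 < phi0 p \<and> 0 < phi1 p \<and> phi0 p + phi1 p < 2 * int N"
    and "(card (scrA1 N P a) > card (scrA2 N P phi0 phi1)) \<noteq> (H1 N P a - H2 N P phi0 phi1 + fbar N P phi0 phi1 > 0)"
  defines "D \<equiv> H1 N P a - H2 N P phi0 phi1 + fbar N P phi0 phi1"
  shows "- (log 2 (2 * real N + 1) / real N) < D" and "D \<le> log 2 (2 * real P + 1) / (2 * real P)"
proof -
  define M where "M = 2 * real N * real P"
  define x where "x = log 2 (card (scrA1 N P a)) - log 2 (card (scrA2 N P phi0 phi1))"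
  note A1 = log_card_scrA1_bounds[OF assms(3), folded M_def]
  note A2 = log_card_scrA2_bounds[OF assms(4), folded M_def]
  have "card (scrA1 N P a) > card (scrA2 N P phi0 phi1) \<longleftrightarrow> 0 < x"
    unfolding x_def using A1(1) A2(1) by simp
  then have mismatch: "(0 < x) \<noteq> (0 < D)"
    using assms(5) unfolding D_def by simp
  have "M * D - real N * log 2 (2 * real P + 1) \<le> x" "x \<le> M * D + 2 * real P * log 2 (2 * real N + 1)"
    using A1(2,3) A2(2,3) unfolding x_def D_def by (simp_all add: algebra_simps)
  from sign_mismatch_bound[OF _ _ _ this mismatch]
  show "- (log 2 (2 * real N + 1) / real N) < D" "D \<le> log 2 (2 * real P + 1) / (2 * real P)"
    using assms(1,2) unfolding M_def by simp_all
qed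

lemma log_double_succ_le:
  fixes x :: real
  assumes "2 \<le> x"
  shows "log 2 (2 * x + 1) \<le> 3 * log 2 x"
proof -
  have "2 * x + 1 \<le> x * x * x"
  proof -
    have "4 \<le> x * x"
      using mult_mono[of 2 x 2 x] assms by simp
    then have "4 * x \<le> x * x * x"
      using assms by (simp add: mult_right_mono)
    then show ?thesis
      using assms by linarith
  qed
  then have "log 2 (2 * x + 1) \<le> log 2 (x ^ 3)"
    using assms by (intro log_mono) (auto simp: power3_eq_cube)
  also have "\<dots> = 3 * log 2 x"
    using assms by (simp add: log_nat_power)
  finally show ?thesis .
qed

lemma abar_bounds_imp_tally_bounds:
  assumes "0 < \<eta>" "0 < P" "\<eta> \<le> abar P a n" "abar P a n \<le> 1 - \<eta>"
  shows "0 < a n \<and> a n < 2 * int P"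
proof -
  have "0 < real_of_int (a n) / (2 * real P)" "real_of_int (a n) / (2 * real P) < 1"
    using assms unfolding abar_def by linarith+
  then show ?thesis
    using assms(2) by (simp add: zero_less_divide_iff divide_less_eq)
qed

lemma freq_bounds_imp_dosage_bounds:
  assumes "0 < \<eta>" "0 < N" "\<eta> \<le> freq N phi0 p" "\<eta> \<le> freq N phi1 p"
    "freq N phi0 p + freq N phi1 p \<le> 1 - \<eta>"
  shows "0 < phi0 p \<and> 0 < phi1 p \<and> phi0 p + phi1 p < 2 * int N"
proof -
  have "0 < real_of_int (phi0 p) / (2 * real N)" "0 < real_of_int (phi1 p) / (2 * real N)"
    "(real_of_int (phi0 p) + real_of_int (phi1 p)) / (2 * real N) < 1"
    using assms unfolding freq_def add_divide_distrib by linarith+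
  then show ?thesis
    using assms(2) by (simp add: zero_less_divide_iff divide_less_eq)
qed

lemma entropy_gap_log_bounds:
  assumes "2 \<le> N" "2 \<le> P"
    and "\<forall>n<N. 0 < a n \<and> a n < 2 * int P"
    and "\<forall>p<P. 0 < phi0 p \<and> 0 < phi1 p \<and> phi0 p + phi1 p < 2 * int N"
    and "(card (scrA1 N P a) > card (scrA2 N P phi0 phi1)) \<noteq> (H1 N P a - H2 N P phi0 phi1 + fbar N P phi0 phi1 > 0)"
  defines "D \<equiv> H1 N P a - H2 N P phi0 phi1 + fbar N P phi0 phi1"
    and "B \<equiv> 3 * (log 2 (real N) / real N + log 2 (real P) / real P)"
  shows "- B < D \<and> D \<le> B"
proof -
  define lN where "lN = log 2 (real N) / real N"
  define lP where "lP = log 2 (real P) / real P"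
  have gap: "- (log 2 (2 * real N + 1) / real N) < D" "D \<le> log 2 (2 * real P + 1) / (2 * real P)"
    using entropy_gap_bounds[OF _ _ assms(3-5)] assms(1,2) unfolding D_def by simp_all
  have "0 < lN" "0 < lP"
    using assms(1,2) unfolding lN_def lP_def by simp_all
  have "log 2 (2 * real N + 1) / real N \<le> 3 * lN"
    using log_double_succ_le[of "real N"] assms(1) unfolding lN_def by (simp add: divide_right_mono)
  with gap(1) have "- (3 * lN) < D"
    by (meson le_less_trans neg_le_iff_le)
  with \<open>0 < lP\<close> have "- B < D"
    unfolding B_def lN_def[symmetric] lP_def[symmetric] by (simp add: distrib_left)
  have "log 2 (2 * real P + 1) / (2 * real P) \<le> 3 * lP"
    using log_double_succ_le[of "real P"] assms(2) unfolding lP_def by (simp add: frac_le)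
  with gap(2) have "D \<le> 3 * lP"
    by (rule order_trans)
  with \<open>0 < lN\<close> have "D \<le> B"
    unfolding B_def lN_def[symmetric] lP_def[symmetric] by (simp add: distrib_left)
  with \<open>- B < D\<close> show ?thesis ..
qed

theorem mainTheorem4:
  fixes \<eta> :: real
  assumes "0 < \<eta>" and "\<eta> < 1/3"
  shows "\<exists>c>0. \<forall>(N::nat) (P::nat) (a::nat \<Rightarrow> int) (phi0::nat \<Rightarrow> int) (phi1::nat \<Rightarrow> int).
    N \<ge> 2 \<longrightarrow> P \<ge> 2 \<longrightarrow>
    (\<forall>n<N. \<eta> \<le> abar P a n \<and> abar P a n \<le> 1 - \<eta>) \<longrightarrow>
    (\<forall>p<P. \<eta> \<le> freq N phi0 p \<and> \<eta> \<le> freq N phi1 p \<and>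
           freq N phi0 p + freq N phi1 p \<le> 1 - \<eta>) \<longrightarrow>
    ((card (scrA1 N P a) > card (scrA2 N P phi0 phi1)) \<noteq>
       (H1 N P a - H2 N P phi0 phi1 + fbar N P phi0 phi1 > 0)) \<longrightarrow>
    (let D = H1 N P a - H2 N P phi0 phi1 + fbar N P phi0 phi1;
         B = c * (log 2 (real N) / real N + log 2 (real P) / real P)
     in - B < D \<and> D \<le> B)"
proof (intro exI[of _ 3] conjI allI impI, simp)
  fix N P :: nat and a phi0 phi1 :: "nat \<Rightarrow> int"
  assume N: "N \<ge> 2" and P: "P \<ge> 2"
    and abar: "\<forall>n<N. \<eta> \<le> abar P a n \<and> abar P a n \<le> 1 - \<eta>"
    and freq: "\<forall>p<P. \<eta> \<le> freq N phi0 p \<and> \<eta> \<le> freq N phi1 p \<and> freq N phi0 p + freq N phi1 p \<le> 1 - \<eta>"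
    and mismatch: "(card (scrA1 N P a) > card (scrA2 N P phi0 phi1))
      \<noteq> (H1 N P a - H2 N P phi0 phi1 + fbar N P phi0 phi1 > 0)"
  have "\<forall>n<N. 0 < a n \<and> a n < 2 * int P"
    using abar P abar_bounds_imp_tally_bounds[OF assms(1), of P a] by simp
  moreover have "\<forall>p<P. 0 < phi0 p \<and> 0 < phi1 p \<and> phi0 p + phi1 p < 2 * int N"
    using freq N freq_bounds_imp_dosage_bounds[OF assms(1), of N phi0 _ phi1] by simp
  ultimately show "let D = H1 N P a - H2 N P phi0 phi1 + fbar N P phi0 phi1;
         B = 3 * (log 2 (real N) / real N + log 2 (real P) / real P)
     in - B < D \<and> D \<le> B"
    unfolding Let_def using entropy_gap_log_bounds[OF N P _ _ mismatch] by blast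
qed

end
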